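(* Let $l\subset\mathbb{R}$ be a compact set. (i) If $l$ is uniformly sparse, then $\overline{\dim}_{\mathrm B}\, l=0$. (ii) If $l$ is uniformly super sparse, then $\dim_{\mathrm A} l=0$. (iii) If $l$ is finite, then $l$ is uniformly super sparse. (iv) The converse of (i) fails: the set $l_0=\{0\}\cup\{2^{-k}:k\ge0\}$ satisfies $\overline{\dim}_{\mathrm B}\, l_0=0$ but is not sparse near $0$, hence not uniformly sparse.
   Context: For a compact set $l\subset\mathbb{R}$ let $W(l)=\{k\in\mathbb{N}: l\cap([2^{-k-1},2^{-k}]\cup[-2^{-k},-2^{-k-1}])\neq\emptyset\}$, and for $a\in l$ let $W(l,a)=W(l-a)$. $l$ is sparse near $a$ if $W(l,a)$ has upper natural density $\limsup_n \#(W(l,a)\cap[1,n])/n=0$. $l$ is uniformly sparse if for every $\delta>0$ there is $N_\delta$ with $\#(W(l,a)\cap[1,N])\le\delta N$ for all $a\in l$ and $N\ge N_\delta$; $l$ is uniformly super sparse if for every $\delta>0$ there is $N_\delta$ with $\#(W(l,a)\cap[k+1,k+N])\le\delta N$ for all $a\in l$, $k\in\mathbb{N}$ and $N\ge N_\delta$. $\overline{\dim}_{\mathrm B}$ is upper box dimension. The Assouad dimension $\dim_{\mathrm A}F$ is the infimum of $s\ge0$ such that there is $C>0$ with $N(B(x,R)\cap F,r)\le C(R/r)^s$ for all $0<r<R$ and $x\in F$, where $N(E,r)$ is the minimal number of intervals of length $r$ covering $E$. *)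

theory Defs
  imports "HOL-Analysis.Analysis"
begin

definition W :: "real set \<Rightarrow> nat set" where
  "W l = {k. l \<inter> ({(1/2)^(k+1) .. (1/2)^k} \<union> {-((1/2)^k) .. -((1/2)^(k+1))}) \<noteq> {}}"

definition W_at :: "real set \<Rightarrow> real \<Rightarrow> nat set" where
  "W_at l a = W ((\<lambda>x. x - a) ` l)"

definition sparse_near :: "real set \<Rightarrow> real \<Rightarrow> bool" where
  "sparse_near l a \<longleftrightarrow>
     limsup (\<lambda>n::nat. ereal (real (card (W_at l a \<inter> {1..n})) / real n)) = 0"

definition unif_sparse :: "real set \<Rightarrow> bool" where
  "unif_sparse l \<longleftrightarrow> (\<forall>\<delta>>0. \<exists>N\<delta>::nat. \<forall>a\<in>l. \<forall>N\<ge>N\<delta>.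
      real (card (W_at l a \<inter> {1..N})) \<le> \<delta> * real N)"

definition unif_super_sparse :: "real set \<Rightarrow> bool" where
  "unif_super_sparse l \<longleftrightarrow> (\<forall>\<delta>>0. \<exists>N\<delta>::nat. \<forall>a\<in>l. \<forall>k::nat. \<forall>N\<ge>N\<delta>.
      real (card (W_at l a \<inter> {k+1..k+N})) \<le> \<delta> * real N)"

definition cover_num :: "real set \<Rightarrow> real \<Rightarrow> nat" where
  "cover_num E r = (LEAST n. \<exists>C::real set. finite C \<and> card C = n \<and> E \<subseteq> (\<Union>c\<in>C. {c..c+r}))"

definition upper_box_dim :: "real set \<Rightarrow> ereal" where
  "upper_box_dim E = Limsup (at_right 0) (\<lambda>r. ereal (ln (real (cover_num E r)) / - ln r))"

definition assouad_dim :: "real set \<Rightarrow> ereal" where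
  "assouad_dim F = Inf (ereal ` {s. s \<ge> 0 \<and> (\<exists>C>0. \<forall>x\<in>F. \<forall>r R. 0 < r \<and> r < R \<longrightarrow>
      real (cover_num (ball x R \<inter> F) r) \<le> C * (R / r) powr s)})"

end

theory Submission
  imports Defs "HOL-Real_Asymp.Real_Asymp"
begin

text \<open>
  The heart of the argument counts r-separated points, \<open>r \<approx> 2^-M\<close>, in a piece of l of
  diameter \<open>2^-k\<close>. Split such a set around one of its points a into the ball of radius
  \<open>2^-(j+1)\<close> and the two half-annuli at scale j: every point of a half-annulus has j in its
  W-set (witnessed by a), so one scale of its budget is used up. If every point of l has at
  most n scales in the window \<open>[k, M]\<close>, there are therefore at most
  \<open>\<lambda>^-n (1+2\<lambda>)^(M+1-k)\<close> such points for every \<open>\<lambda> \<in> (0,1]\<close>, and the piece is covered by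
  twice as many intervals of length r. Uniform (super) sparsity gives \<open>n \<le> \<delta>(M+1-k) + N\<close>,
  and for small \<open>\<delta> = \<lambda>\<close> the bound is below a constant times \<open>2^(s(M+1-k))\<close> for any
  s > 0: globally for the box dimension, and in balls of radius R, where \<open>2^(M+1-k) \<approx> R/r\<close>,
  for the Assouad dimension. The set \<open>l0\<close> has every scale in \<open>W(l0, 0)\<close>, yet is covered by
  \<open>M + 2\<close> intervals of length \<open>2^-M\<close>.
\<close>

section \<open>Dyadic scales and covering numbers\<close>

lemma mem_W_at_iff:
  "k \<in> W_at l q \<longleftrightarrow> (\<exists>a\<in>l. (1/2)^(k+1) \<le> \<bar>a - q\<bar> \<and> \<bar>a - q\<bar> \<le> (1/2)^k)"
proof -
  have "(1/2::real)^(k+1) > 0" by simp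
  then show ?thesis
    unfolding W_at_def W_def by (force simp: abs_if)
qed

lemma dyadic_scale:
  fixes r :: real assumes "0 < r"
  obtains M where "(1/2)^(M+1) < r" "2^M \<le> max 1 (1/r)"
proof (cases "1 \<le> r")
  case True
  then show ?thesis using that[of 0] by simp
next
  case False
  define M where "M = nat \<lfloor>log 2 (1/r)\<rfloor>"
  have r1: "1 \<le> 1/r" using False assms by simp
  have "2^M \<le> 1/r" unfolding M_def using power_of_nat_log_le[of 2 "1/r"] r1 by simp
  moreover have "(1/2)^(M+1) < r"
  proof -
    have "log 2 (1/r) < real M + 1" unfolding M_def using r1 by linarith
    then have "1/r < 2 powr real (M + 1)" using assms by (simp add: log_less_iff add.commute)
    then have "1/r < 2^(M+1)" by (simp only: powr_realpow)
    then show ?thesis using assms by (simp add: power_one_over field_simps)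
  qed
  ultimately show ?thesis using that[of M] r1 by simp
qed

lemma cover_num_le:
  assumes "finite C" "E \<subseteq> (\<Union>c\<in>C. {c..c+r})"
  shows "cover_num E r \<le> card C"
  unfolding cover_num_def using assms by (intro Least_le) blast

definition grid_cells :: "real set \<Rightarrow> real \<Rightarrow> int set" where
  "grid_cells E r = (\<lambda>e. \<lfloor>e / r\<rfloor>) ` E"

lemma finite_grid_cells:
  assumes "bounded E" "0 < r"
  shows "finite (grid_cells E r)"
proof -
  obtain B where B: "\<And>e. e \<in> E \<Longrightarrow> \<bar>e\<bar> \<le> B"
    using assms(1) unfolding bounded_iff by auto
  have "grid_cells E r \<subseteq> {\<lfloor>-B/r\<rfloor>..\<lfloor>B/r\<rfloor>}"
  proof
    fix j assume "j \<in> grid_cells E r"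
    then obtain e where e: "e \<in> E" "j = \<lfloor>e/r\<rfloor>" unfolding grid_cells_def by auto
    have "-B \<le> e" "e \<le> B" using B[OF e(1)] by auto
    then have "-B/r \<le> e/r" "e/r \<le> B/r"
      using divide_right_mono[of "-B" e r] divide_right_mono[of e B r] assms(2) by auto
    then show "j \<in> {\<lfloor>-B/r\<rfloor>..\<lfloor>B/r\<rfloor>}" using e(2) by (auto intro: floor_mono)
  qed
  then show ?thesis using finite_subset by blast
qed

lemma grid_cells_cover:
  assumes "0 < r"
  shows "E \<subseteq> (\<Union>c\<in>(\<lambda>j. of_int j * r) ` grid_cells E r. {c..c+r})"
proof
  fix e assume "e \<in> E"
  moreover have "of_int \<lfloor>e/r\<rfloor> * r \<le> e" "e \<le> of_int \<lfloor>e/r\<rfloor> * r + r"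
    using floor_divide_lower[OF assms, of e] floor_divide_upper[OF assms, of e]
    by (simp_all add: algebra_simps)
  ultimately show "e \<in> (\<Union>c\<in>(\<lambda>j. of_int j * r) ` grid_cells E r. {c..c+r})"
    unfolding grid_cells_def by fastforce
qed

lemma cover_num_le_card_grid_cells:
  assumes "bounded E" "0 < r"
  shows "cover_num E r \<le> card (grid_cells E r)"
proof -
  have "cover_num E r \<le> card ((\<lambda>j. of_int j * r) ` grid_cells E r)"
    using finite_grid_cells[OF assms] grid_cells_cover[OF assms(2)] by (intro cover_num_le) auto
  also have "\<dots> \<le> card (grid_cells E r)" by (rule card_image_le[OF finite_grid_cells[OF assms]])
  finally show ?thesis .
qed

lemma cover_num_cover:
  assumes "bounded E" "0 < r"
  obtains C where "finite C" "card C = cover_num E r" "E \<subseteq> (\<Union>c\<in>C. {c..c+r})"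
proof -
  let ?P = "\<lambda>n. \<exists>C::real set. finite C \<and> card C = n \<and> E \<subseteq> (\<Union>c\<in>C. {c..c+r})"
  have "?P (card ((\<lambda>j. of_int j * r) ` grid_cells E r))"
    using finite_grid_cells[OF assms] grid_cells_cover[OF assms(2)] by blast
  then have "?P (cover_num E r)" unfolding cover_num_def by (rule LeastI)
  then show ?thesis using that by blast
qed

lemma cover_num_UN_le:
  assumes "finite Y" "\<And>y. y \<in> Y \<Longrightarrow> bounded (F y)" "0 < r"
  shows "cover_num (\<Union>y\<in>Y. F y) r \<le> (\<Sum>y\<in>Y. cover_num (F y) r)"
proof -
  have "\<exists>C. finite C \<and> card C = cover_num (F y) r \<and> F y \<subseteq> (\<Union>c\<in>C. {c..c+r})"
    if "y \<in> Y" for y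
    by (rule cover_num_cover[OF assms(2)[OF that] assms(3)]) blast
  then obtain C where C: "\<forall>y\<in>Y. finite (C y) \<and> card (C y) = cover_num (F y) r
      \<and> F y \<subseteq> (\<Union>c\<in>C y. {c..c+r})"
    by metis
  have "(\<Union>y\<in>Y. F y) \<subseteq> (\<Union>c\<in>(\<Union>y\<in>Y. C y). {c..c+r})" using C by blast
  then have "cover_num (\<Union>y\<in>Y. F y) r \<le> card (\<Union>y\<in>Y. C y)"
    using C assms(1) by (intro cover_num_le) auto
  also have "\<dots> \<le> (\<Sum>y\<in>Y. card (C y))" by (rule card_UN_le[OF assms(1)])
  also have "\<dots> = (\<Sum>y\<in>Y. cover_num (F y) r)" using C by (intro sum.cong) auto
  finally show ?thesis .
qed

lemma abs_diff_gt_if_floor_gap: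
  fixes x z r :: real
  assumes "0 < r" "2 \<le> \<bar>\<lfloor>x/r\<rfloor> - \<lfloor>z/r\<rfloor>\<bar>"
  shows "r < \<bar>x - z\<bar>"
proof -
  have "1 < \<bar>x/r - z/r\<bar>"
    using assms(2) real_of_int_floor_gt_diff_one[of "x/r"] real_of_int_floor_gt_diff_one[of "z/r"]
      of_int_floor_le[of "x/r"] of_int_floor_le[of "z/r"] by linarith
  also have "\<bar>x/r - z/r\<bar> = \<bar>x - z\<bar> / r" using assms(1) by (simp add: diff_divide_distrib[symmetric])
  finally show ?thesis using assms(1) by (simp add: field_simps)
qed

definition separated :: "real \<Rightarrow> real set \<Rightarrow> bool" where
  "separated r Q \<longleftrightarrow> (\<forall>q\<in>Q. \<forall>q'\<in>Q. q \<noteq> q' \<longrightarrow> r < \<bar>q - q'\<bar>)"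

lemma separated_mono: "separated r Q \<Longrightarrow> r' \<le> r \<Longrightarrow> Q' \<subseteq> Q \<Longrightarrow> separated r' Q'"
  unfolding separated_def by (meson le_less_trans subsetD)

text \<open>Grid cells of one parity are pairwise more than r apart.\<close>

lemma cover_num_le_packing_bound:
  assumes "bounded E" "0 < r"
    and packing: "\<And>Q. finite Q \<Longrightarrow> Q \<subseteq> E \<Longrightarrow> separated r Q \<Longrightarrow> real (card Q) \<le> B"
  shows "real (cover_num E r) \<le> 2 * B"
proof -
  let ?G = "grid_cells E r"
  have "\<forall>j\<in>?G. \<exists>e\<in>E. \<lfloor>e/r\<rfloor> = j" unfolding grid_cells_def by blast
  then obtain rep where rep: "\<And>j. j \<in> ?G \<Longrightarrow> rep j \<in> E \<and> \<lfloor>rep j / r\<rfloor> = j" by metis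
  have parity_class: "real (card {j\<in>?G. j mod 2 = p}) \<le> B" for p
  proof -
    let ?J = "{j\<in>?G. j mod 2 = p}"
    have "inj_on rep ?J" by (rule inj_onI) (metis (no_types, lifting) mem_Collect_eq rep)
    then have "card ?J = card (rep ` ?J)" by (simp add: card_image)
    also have "real (card (rep ` ?J)) \<le> B"
    proof (rule packing)
      show "finite (rep ` ?J)" using finite_grid_cells[OF assms(1,2)] by simp
      show "rep ` ?J \<subseteq> E" using rep by auto
      have "r < \<bar>rep i - rep i'\<bar>" if "i \<in> ?J" "i' \<in> ?J" "i \<noteq> i'" for i i'
      proof (rule abs_diff_gt_if_floor_gap[OF assms(2)])
        show "2 \<le> \<bar>\<lfloor>rep i / r\<rfloor> - \<lfloor>rep i' / r\<rfloor>\<bar>" using that rep by auto presburger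
      qed
      then show "separated r (rep ` ?J)" unfolding separated_def by blast
    qed
    finally show ?thesis .
  qed
  have "cover_num E r \<le> card ?G" by (rule cover_num_le_card_grid_cells[OF assms(1,2)])
  also have "?G = {j\<in>?G. j mod 2 = 0} \<union> {j\<in>?G. j mod 2 = 1}" by auto
  also have "card \<dots> \<le> card {j\<in>?G. j mod 2 = 0} + card {j\<in>?G. j mod 2 = 1}" by (rule card_Un_le)
  finally show ?thesis using parity_class[of 0] parity_class[of 1] by linarith
qed

section \<open>Counting separated sets\<close>

lemma dyadic_split:
  fixes a :: real
  assumes a: "a \<in> l" and radius: "\<forall>q\<in>Q. \<bar>q - a\<bar> \<le> (1/2)^j"
  obtains S1 S2 where "Q \<subseteq> {q\<in>Q. \<bar>q - a\<bar> \<le> (1/2)^(j+1)} \<union> S1 \<union> S2" "S1 \<subseteq> Q" "S2 \<subseteq> Q"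
    "\<And>S p q. S \<in> {S1, S2} \<Longrightarrow> p \<in> S \<Longrightarrow> q \<in> S \<Longrightarrow> \<bar>p - q\<bar> \<le> (1/2)^(j+1)"
    "\<And>q. q \<in> S1 \<union> S2 \<Longrightarrow> j \<in> W_at l q"
proof -
  define S1 where "S1 = {q\<in>Q. a + (1/2)^(j+1) < q}"
  define S2 where "S2 = {q\<in>Q. q < a - (1/2)^(j+1)}"
  have half: "(1/2::real)^j = 2 * (1/2)^(j+1)" by simp
  have "Q \<subseteq> {q\<in>Q. \<bar>q - a\<bar> \<le> (1/2)^(j+1)} \<union> S1 \<union> S2"
  proof
    fix q assume "q \<in> Q"
    then show "q \<in> {q\<in>Q. \<bar>q - a\<bar> \<le> (1/2)^(j+1)} \<union> S1 \<union> S2"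
      unfolding S1_def S2_def by (cases "0 \<le> q - a") (auto simp: not_le)
  qed
  moreover have near_a: "q - a \<le> 2 * (1/2)^(j+1) \<and> a - q \<le> 2 * (1/2)^(j+1)" if "q \<in> Q" for q
    using radius that half unfolding abs_le_iff by (metis minus_diff_eq)
  moreover have "\<bar>p - q\<bar> \<le> (1/2)^(j+1)" if "S \<in> {S1, S2}" "p \<in> S" "q \<in> S" for S p q
  proof -
    have "p \<in> Q" "q \<in> Q" and "(a + (1/2)^(j+1) < p \<and> a + (1/2)^(j+1) < q) \<or>
        (p < a - (1/2)^(j+1) \<and> q < a - (1/2)^(j+1))"
      using that by (auto simp: S1_def S2_def)
    then show ?thesis using near_a[of p] near_a[of q] unfolding abs_le_iff by linarith
  qed
  moreover have "j \<in> W_at l q" if "q \<in> S1 \<union> S2" for q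
  proof -
    have "q \<in> Q" and "a + (1/2)^(j+1) < q \<or> q < a - (1/2)^(j+1)"
      using that by (auto simp: S1_def S2_def)
    then have "(1/2)^(j+1) \<le> \<bar>a - q\<bar> \<and> \<bar>a - q\<bar> \<le> (1/2)^j"
      using near_a[of q] half abs_ge_self[of "a - q"] abs_ge_minus_self[of "a - q"]
      unfolding abs_le_iff by linarith
    then show ?thesis unfolding mem_W_at_iff using a by blast
  qed
  ultimately show ?thesis using that[of S1 S2] unfolding S1_def S2_def by auto
qed

lemma card_Int_atLeastAtMost_split:
  fixes A :: "nat set"
  assumes "j \<in> A" "j \<le> M"
  shows "card (A \<inter> {j..M}) = card (A \<inter> {j+1..M}) + 1"
proof -
  have "A \<inter> {j..M} = insert j (A \<inter> {j+1..M})" using assms by auto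
  then show ?thesis by simp
qed

lemma card_separated_dyadic_step:
  fixes B :: "nat \<Rightarrow> real"
  assumes IH: "\<And>S b m. finite S \<Longrightarrow> S \<subseteq> l \<Longrightarrow> b \<in> S \<Longrightarrow> \<forall>q\<in>S. \<bar>q - b\<bar> \<le> (1/2)^(j+1)
      \<Longrightarrow> separated \<rho> S \<Longrightarrow> \<forall>q\<in>S. card (W_at l q \<inter> {j+1..M}) \<le> m \<Longrightarrow> real (card S) \<le> B m"
    and B: "\<And>m. 0 \<le> B m" and jM: "j \<le> M"
    and Q: "finite Q" "Q \<subseteq> l" "a \<in> Q" "\<forall>q\<in>Q. \<bar>q - a\<bar> \<le> (1/2)^j" "separated \<rho> Q"
    and budget: "\<forall>q\<in>Q. card (W_at l q \<inter> {j..M}) \<le> n"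
  shows "real (card Q) \<le> B n + (if n = 0 then 0 else 2 * B (n - 1))"
proof -
  obtain S1 S2 where split: "Q \<subseteq> {q\<in>Q. \<bar>q - a\<bar> \<le> (1/2)^(j+1)} \<union> S1 \<union> S2" "S1 \<subseteq> Q" "S2 \<subseteq> Q"
    and diam: "\<And>S p q. S \<in> {S1, S2} \<Longrightarrow> p \<in> S \<Longrightarrow> q \<in> S \<Longrightarrow> \<bar>p - q\<bar> \<le> (1/2)^(j+1)"
    and scale_j: "\<And>q. q \<in> S1 \<union> S2 \<Longrightarrow> j \<in> W_at l q"
    using dyadic_split[of a l Q j] Q by blast
  have near_bound: "real (card {q\<in>Q. \<bar>q - a\<bar> \<le> (1/2)^(j+1)}) \<le> B n"
  proof (rule IH)
    have "card (W_at l q \<inter> {j+1..M}) \<le> card (W_at l q \<inter> {j..M})" for q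
      by (rule card_mono) auto
    then show "\<forall>q\<in>{q\<in>Q. \<bar>q - a\<bar> \<le> (1/2)^(j+1)}. card (W_at l q \<inter> {j+1..M}) \<le> n"
      using budget le_trans by blast
    show "separated \<rho> {q\<in>Q. \<bar>q - a\<bar> \<le> (1/2)^(j+1)}" using Q(5) by (rule separated_mono) auto
  qed (use Q in auto)
  have side_bound: "real (card S) \<le> (if n = 0 then 0 else B (n - 1))" if S: "S \<in> {S1, S2}" for S
  proof (cases "S = {}")
    case False
    then obtain b where b: "b \<in> S" by auto
    have SQ: "S \<subseteq> Q" using S split(2,3) by blast
    have drop: "card (W_at l q \<inter> {j+1..M}) + 1 \<le> n" if "q \<in> S" for q
    proof -
      have "card (W_at l q \<inter> {j+1..M}) + 1 = card (W_at l q \<inter> {j..M})"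
        using card_Int_atLeastAtMost_split[OF scale_j jM, of q] S that by auto
      also have "\<dots> \<le> n" using budget SQ that by blast
      finally show ?thesis .
    qed
    have "real (card S) \<le> B (n - 1)"
    proof (rule IH[OF _ _ b])
      show "finite S" using Q(1) SQ finite_subset by blast
      show "S \<subseteq> l" using SQ Q(2) by blast
      show "\<forall>q\<in>S. \<bar>q - b\<bar> \<le> (1/2)^(j+1)" using diam[OF S _ b] by blast
      show "separated \<rho> S" using Q(5) order_refl SQ by (rule separated_mono)
      show "\<forall>q\<in>S. card (W_at l q \<inter> {j+1..M}) \<le> n - 1" using drop by fastforce
    qed
    then show ?thesis using drop[OF b] by simp
  qed (use B in simp)
  have "card Q \<le> card ({q\<in>Q. \<bar>q - a\<bar> \<le> (1/2)^(j+1)} \<union> S1 \<union> S2)"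
    using Q(1) split finite_subset by (intro card_mono) auto
  also have "\<dots> \<le> card {q\<in>Q. \<bar>q - a\<bar> \<le> (1/2)^(j+1)} + card S1 + card S2"
    by (meson card_Un_le add_le_mono1 order_trans)
  finally have "real (card Q) \<le> card {q\<in>Q. \<bar>q - a\<bar> \<le> (1/2)^(j+1)} + real (card S1) + card S2"
    by (metis of_nat_add of_nat_le_iff)
  then show ?thesis using near_bound side_bound[of S1] side_bound[of S2] by (cases "n = 0") auto
qed

text \<open>The weight \<open>B_n = (1/\<lambda>)^n (1+2\<lambda>)^d\<close> satisfies \<open>B_n + 2 B_(n-1) = B_n (1+2\<lambda>)\<close>,
  which is exactly what the recursion of the dyadic step requires.\<close>

lemma card_separated_le:
  fixes l Q :: "real set" and lam :: real
  assumes lam: "0 < lam" "lam \<le> 1"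
  shows "finite Q \<Longrightarrow> Q \<subseteq> l \<Longrightarrow> a \<in> Q \<Longrightarrow> \<forall>q\<in>Q. \<bar>q - a\<bar> \<le> (1/2)^j
    \<Longrightarrow> separated ((1/2)^(M+1)) Q \<Longrightarrow> \<forall>q\<in>Q. card (W_at l q \<inter> {j..M}) \<le> n
    \<Longrightarrow> real (card Q) \<le> (1/lam)^n * (1+2*lam)^(M+1-j)"
proof (induction "M+1-j" arbitrary: j n Q a)
  case 0
  have "(1/2::real)^j \<le> (1/2)^(M+1)" using 0(1) by (intro power_decreasing) auto
  then have "Q \<subseteq> {a}" using 0(3-6) unfolding separated_def by force
  then have "card Q \<le> card {a}" by (intro card_mono) simp_all
  moreover have "1 \<le> (1/lam)^n" using lam by simp
  ultimately show ?case using 0(1) by simp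
next
  case (Suc d)
  have d: "d = M + 1 - (j+1)" and jM: "j \<le> M" using Suc.hyps(2) by auto
  have "real (card Q) \<le> (1/lam)^n * (1+2*lam)^d + (if n = 0 then 0 else 2 * ((1/lam)^(n-1) * (1+2*lam)^d))"
    by (rule card_separated_dyadic_step[where B = "\<lambda>m. (1/lam)^m * (1+2*lam)^d", OF _ _ jM Suc.prems])
      (use Suc.hyps(1)[OF d] d lam in auto)
  also have "\<dots> \<le> (1/lam)^n * (1+2*lam)^(M+1-j)"
  proof (cases n)
    case 0
    then show ?thesis unfolding Suc.hyps(2)[symmetric] using lam by simp
  next
    case (Suc m)
    then show ?thesis unfolding Suc.hyps(2)[symmetric] using lam by (simp add: field_simps)
  qed
  finally show ?case .
qed

lemma cover_num_le_budget:
  assumes El: "E \<subseteq> l" and diam: "\<forall>x\<in>E. \<forall>y\<in>E. \<bar>x - y\<bar> \<le> (1/2)^k"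
    and r: "(1/2)^(M+1) \<le> r" and budget: "\<forall>b\<in>l. card (W_at l b \<inter> {k..M}) \<le> n"
    and lam: "0 < lam" "lam \<le> 1"
  shows "real (cover_num E r) \<le> 2 * ((1/lam)^n * (1+2*lam)^(M+1-k))"
proof (rule cover_num_le_packing_bound)
  show "0 < r" using r zero_less_power[of "1/2::real" "M+1"] by linarith
  show "bounded E"
  proof (cases "E = {}")
    case False
    then obtain e where "e \<in> E" by auto
    then have "E \<subseteq> cball e ((1/2)^k)" using diam by (auto simp: dist_real_def)
    then show ?thesis using bounded_subset bounded_cball by blast
  qed simp
  fix Q assume Q: "finite Q" "Q \<subseteq> E" "separated r Q"
  show "real (card Q) \<le> (1/lam)^n * (1+2*lam)^(M+1-k)"
  proof (cases "Q = {}")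
    case False
    then obtain a where a: "a \<in> Q" by auto
    show ?thesis
    proof (rule card_separated_le[OF lam Q(1) _ a])
      show "Q \<subseteq> l" using Q(2) El by blast
      show "\<forall>q\<in>Q. \<bar>q - a\<bar> \<le> (1/2)^k" using Q(2) diam a by blast
      show "separated ((1/2)^(M+1)) Q" using Q(3) r by (rule separated_mono) simp
      show "\<forall>q\<in>Q. card (W_at l q \<inter> {k..M}) \<le> n" using Q(2) El budget by blast
    qed
  qed (use lam in simp)
qed

lemma cover_num_le_budget_UN:
  assumes Y: "finite Y" "l \<subseteq> (\<Union>y\<in>Y. ball y (1/4))" and El: "E \<subseteq> l"
    and r: "(1/2)^(M+1) \<le> r" and budget: "\<forall>b\<in>l. card (W_at l b \<inter> {1..M}) \<le> n"
    and lam: "0 < lam" "lam \<le> 1"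
  shows "real (cover_num E r) \<le> 2 * card Y * ((1/lam)^n * (1+2*lam)^M)"
proof -
  have r0: "0 < r" using r zero_less_power[of "1/2::real" "M+1"] by linarith
  have "E = (\<Union>y\<in>Y. ball y (1/4) \<inter> E)" using Y(2) El by blast
  then have "cover_num E r \<le> (\<Sum>y\<in>Y. cover_num (ball y (1/4) \<inter> E) r)"
    using cover_num_UN_le[OF Y(1) _ r0, of "\<lambda>y. ball y (1/4) \<inter> E"] by (simp add: bounded_Int)
  then have "real (cover_num E r) \<le> (\<Sum>y\<in>Y. real (cover_num (ball y (1/4) \<inter> E) r))"
    by (metis of_nat_le_iff of_nat_sum)
  also have "\<dots> \<le> (\<Sum>y\<in>Y. 2 * ((1/lam)^n * (1+2*lam)^(M+1-1)))"
  proof (rule sum_mono)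
    fix y
    have "\<bar>x - z\<bar> \<le> (1/2)^1" if "x \<in> ball y (1/4)" "z \<in> ball y (1/4)" for x z :: real
      using dist_triangle3[of x z y] that by (simp add: dist_real_def)
    then have "\<forall>x\<in>ball y (1/4) \<inter> E. \<forall>z\<in>ball y (1/4) \<inter> E. \<bar>x - z\<bar> \<le> (1/2)^1" by blast
    then show "real (cover_num (ball y (1/4) \<inter> E) r) \<le> 2 * ((1/lam)^n * (1+2*lam)^(M+1-1))"
      using El by (intro cover_num_le_budget[OF _ _ r budget lam]) auto
  qed
  finally show ?thesis by simp
qed

section \<open>Sparsity budgets\<close>

lemma small_entropy_exists:
  fixes c :: real assumes "0 < c"
  obtains \<delta> where "0 < \<delta>" "\<delta> \<le> 1" "\<delta> * ln (1/\<delta>) + 2*\<delta> < c"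
proof -
  have "((\<lambda>d::real. d * ln (1/d) + 2*d) \<longlongrightarrow> 0) (at_right 0)" by real_asymp
  then have "\<forall>\<^sub>F d in at_right 0. d * ln (1/d) + 2*d < c"
    using assms by (intro order_tendstoD(2)) auto
  then obtain b where b: "0 < b" "\<And>d. 0 < d \<Longrightarrow> d < b \<Longrightarrow> d * ln (1/d) + 2*d < c"
    unfolding eventually_at_right_field by auto
  define \<delta> where "\<delta> = min (b/2) 1"
  have "0 < \<delta>" "\<delta> \<le> 1" "\<delta> * ln (1/\<delta>) + 2*\<delta> < c"
    using b by (auto simp: \<delta>_def intro!: b(2))
  then show ?thesis by (rule that)
qed

lemma budget_power_le_exp:
  fixes \<delta> :: real and L N :: nat
  assumes "0 < \<delta>" "\<delta> \<le> 1"
  shows "(1/\<delta>)^(nat \<lfloor>\<delta> * L\<rfloor> + N) * (1+2*\<delta>)^L \<le> (1/\<delta>)^N * exp (L * (\<delta> * ln (1/\<delta>) + 2*\<delta>))"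
proof -
  have pow_exp: "x^k = exp (real k * ln x)" if "0 < x" for x :: real and k :: nat
    using that by (simp add: exp_of_nat_mult)
  have "(1/\<delta>)^(nat \<lfloor>\<delta> * L\<rfloor>) = exp (nat \<lfloor>\<delta> * L\<rfloor> * ln (1/\<delta>))"
    by (rule pow_exp) (use assms in simp)
  also have "\<dots> \<le> exp (\<delta> * L * ln (1/\<delta>))"
    using assms by (intro exp_mono mult_right_mono of_nat_floor) auto
  finally have a: "(1/\<delta>)^(nat \<lfloor>\<delta> * L\<rfloor>) \<le> exp (\<delta> * L * ln (1/\<delta>))" .
  have "(1+2*\<delta>)^L = exp (L * ln (1+2*\<delta>))"
    by (rule pow_exp) (use assms in simp)
  also have "\<dots> \<le> exp (L * (2*\<delta>))"
    using assms by (intro exp_mono mult_left_mono ln_add_one_self_le_self) auto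
  finally have b: "(1+2*\<delta>)^L \<le> exp (L * (2*\<delta>))" .
  have "(1/\<delta>)^(nat \<lfloor>\<delta> * L\<rfloor>) * (1+2*\<delta>)^L \<le> exp (L * (\<delta> * ln (1/\<delta>) + 2*\<delta>))"
    using mult_mono[OF a b exp_ge_zero] assms(1) by (simp add: algebra_simps exp_add)
  then show ?thesis using assms(1) by (simp add: power_add mult.assoc mult_left_mono)
qed

text \<open>With \<open>\<lambda> = \<delta>\<close> in the counting bound, a budget of \<open>\<delta>L\<close> scales out of L costs at most
  a factor \<open>2^(sL)\<close>.\<close>

lemma budget_growth:
  fixes s :: real assumes "0 < s"
  obtains \<delta> where "0 < \<delta>" "\<delta> \<le> 1"
    "\<And>L N :: nat. (1/\<delta>)^(nat \<lfloor>\<delta> * L\<rfloor> + N) * (1+2*\<delta>)^L \<le> (1/\<delta>)^N * (2^L) powr s"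
proof -
  obtain \<delta> where \<delta>: "0 < \<delta>" "\<delta> \<le> 1" "\<delta> * ln (1/\<delta>) + 2*\<delta> < s * ln 2"
    using small_entropy_exists[of "s * ln 2"] assms by auto
  have "(1/\<delta>)^(nat \<lfloor>\<delta> * L\<rfloor> + N) * (1+2*\<delta>)^L \<le> (1/\<delta>)^N * (2^L) powr s" for L N :: nat
  proof -
    have "(1/\<delta>)^(nat \<lfloor>\<delta> * L\<rfloor> + N) * (1+2*\<delta>)^L \<le> (1/\<delta>)^N * exp (L * (\<delta> * ln (1/\<delta>) + 2*\<delta>))"
      by (rule budget_power_le_exp[OF \<delta>(1,2)])
    also have "\<dots> \<le> (1/\<delta>)^N * exp (L * (s * ln 2))"
      using \<delta> by (intro mult_left_mono exp_mono) auto
    also have "exp (L * (s * ln 2)) = (2^L) powr s" by (simp add: powr_def ln_realpow)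
    finally show ?thesis .
  qed
  then show ?thesis by (rule that[OF \<delta>(1,2)])
qed

lemma card_window_le:
  fixes A :: "nat set"
  assumes "\<forall>N\<ge>N0. real (card (A \<inter> {k+1..k+N})) \<le> \<delta> * real N" "0 \<le> \<delta>"
  shows "card (A \<inter> {k+1..k+N}) \<le> nat \<lfloor>\<delta> * real N\<rfloor> + N0"
proof (cases "N0 \<le> N")
  case True
  then show ?thesis using assms(1) le_nat_floor[of "card (A \<inter> {k+1..k+N})"] by fastforce
next
  case False
  have "card (A \<inter> {k+1..k+N}) \<le> card {k+1..k+N}" by (rule card_mono) auto
  then show ?thesis using False by simp
qed

lemma unif_sparse_budget:
  assumes "unif_sparse l" "0 < \<delta>"
  obtains N0 where "\<And>b M. b \<in> l \<Longrightarrow> card (W_at l b \<inter> {1..M}) \<le> nat \<lfloor>\<delta> * real M\<rfloor> + N0"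
proof -
  obtain N0 where N0: "\<forall>b\<in>l. \<forall>N\<ge>N0. real (card (W_at l b \<inter> {0+1..0+N})) \<le> \<delta> * real N"
    using assms unfolding unif_sparse_def by auto
  have "card (W_at l b \<inter> {0+1..0+M}) \<le> nat \<lfloor>\<delta> * real M\<rfloor> + N0" if "b \<in> l" for b M
    by (rule card_window_le) (use N0 that assms(2) in auto)
  then show ?thesis by (intro that) simp
qed

lemma unif_super_sparse_budget:
  assumes "unif_super_sparse l" "0 < \<delta>"
  obtains N0 where "\<And>b k M. b \<in> l \<Longrightarrow> 1 \<le> k \<Longrightarrow>
    card (W_at l b \<inter> {k..M}) \<le> nat \<lfloor>\<delta> * real (M+1-k)\<rfloor> + N0"
proof -
  obtain N0 where N0: "\<forall>b\<in>l. \<forall>k. \<forall>N\<ge>N0. real (card (W_at l b \<inter> {k+1..k+N})) \<le> \<delta> * real N"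
    using assms unfolding unif_super_sparse_def by auto
  have "card (W_at l b \<inter> {k..M}) \<le> nat \<lfloor>\<delta> * real (M+1-k)\<rfloor> + N0" if "b \<in> l" "1 \<le> k" for b k M
  proof -
    have window: "{k..M} = {(k-1)+1..(k-1)+(M+1-k)}" using that(2) by auto
    have "card (W_at l b \<inter> {(k-1)+1..(k-1)+(M+1-k)}) \<le> nat \<lfloor>\<delta> * real (M+1-k)\<rfloor> + N0"
      by (rule card_window_le) (use N0 that(1) assms(2) in auto)
    then show ?thesis by (simp only: window)
  qed
  then show ?thesis using that by blast
qed

lemma unif_super_sparse_imp_unif_sparse: "unif_super_sparse l \<Longrightarrow> unif_sparse l"
  unfolding unif_super_sparse_def unif_sparse_def by (metis add_0)

section \<open>Dimension zero\<close>

lemma ln_ratio_le_of_powr_bound: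
  fixes r s A :: real
  assumes r: "0 < r" "r < 1" and s: "0 \<le> s" and n: "real n \<le> A * (1/r) powr s"
  shows "ln (real n) / - ln r \<le> ln (max A 1) / - ln r + s"
proof -
  have "1 \<le> (1/r) powr s" using r s by (simp add: ge_one_powr_ge_zero)
  then have one: "1 \<le> max A 1 * (1/r) powr s"
    using mult_mono[of 1 "max A 1" 1 "(1/r) powr s"] by simp
  have "ln (real n) \<le> ln (max A 1 * (1/r) powr s)"
  proof (cases "n = 0")
    case False
    have "real n \<le> max A 1 * (1/r) powr s"
      using n by (smt (verit) mult_right_mono powr_ge_zero)
    then show ?thesis using False by (intro ln_mono) auto
  qed (use one in simp)
  also have "\<dots> = ln (max A 1) + s * - ln r"
    using r by (simp add: ln_mult ln_powr ln_div)
  finally show ?thesis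
    using r by (simp add: divide_simps)
qed

lemma ln_ratio_nonneg:
  fixes r :: real
  assumes "0 < r" "r < 1"
  shows "0 \<le> ln (real n) / - ln r"
proof -
  have "0 \<le> ln (real n)" by (cases "n = 0") auto
  moreover have "0 < - ln r" using assms by simp
  ultimately show ?thesis by (rule divide_nonneg_pos)
qed

lemma upper_box_dim_eq_0I:
  assumes "\<And>s. 0 < s \<Longrightarrow> \<exists>A. \<forall>\<^sub>F r in at_right 0. real (cover_num E r) \<le> A * (1/r) powr s"
  shows "upper_box_dim E = 0"
proof -
  have small: "\<forall>\<^sub>F r in at_right (0::real). 0 < r \<and> r < 1"
    unfolding eventually_at_right_field by (intro exI[of _ 1]) auto
  have "upper_box_dim E \<le> 0"
    unfolding upper_box_dim_def
  proof (rule ereal_le_epsilon2)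
    fix \<epsilon> :: real assume \<epsilon>: "0 < \<epsilon>"
    then obtain A where A: "\<forall>\<^sub>F r in at_right 0. real (cover_num E r) \<le> A * (1/r) powr (\<epsilon>/2)"
      using assms[of "\<epsilon>/2"] by auto
    have "((\<lambda>r. ln (max A 1) / - ln r) \<longlongrightarrow> 0) (at_right 0)" by real_asymp
    then have "\<forall>\<^sub>F r in at_right 0. ln (max A 1) / - ln r < \<epsilon>/2"
      using \<epsilon> by (intro order_tendstoD(2)) auto
    with A small have "\<forall>\<^sub>F r in at_right 0. ereal (ln (real (cover_num E r)) / - ln r) \<le> ereal \<epsilon>"
    proof eventually_elim
      case (elim r)
      then have "ln (real (cover_num E r)) / - ln r \<le> ln (max A 1) / - ln r + \<epsilon>/2"
        using \<epsilon> by (intro ln_ratio_le_of_powr_bound) auto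
      then have "ln (real (cover_num E r)) / - ln r \<le> \<epsilon>" using elim(3) by linarith
      then show ?case by simp
    qed
    then have "Limsup (at_right 0) (\<lambda>r. ereal (ln (real (cover_num E r)) / - ln r)) \<le> ereal \<epsilon>"
      by (rule Limsup_bounded)
    then show "Limsup (at_right 0) (\<lambda>r. ereal (ln (real (cover_num E r)) / - ln r)) \<le> 0 + ereal \<epsilon>"
      by simp
  qed
  moreover have "0 \<le> upper_box_dim E"
    unfolding upper_box_dim_def
  proof (rule le_Limsup)
    show "\<forall>\<^sub>F r in at_right 0. 0 \<le> ereal (ln (real (cover_num E r)) / - ln r)"
      using small by eventually_elim (use ln_ratio_nonneg in simp)
  qed simp
  ultimately show ?thesis by (rule antisym)
qed

lemma assouad_dim_eq_0I:
  assumes "\<And>s. 0 < s \<Longrightarrow> \<exists>C>0. \<forall>x\<in>F. \<forall>r R. 0 < r \<and> r < R \<longrightarrow>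
      real (cover_num (ball x R \<inter> F) r) \<le> C * (R / r) powr s"
  shows "assouad_dim F = 0"
proof -
  let ?S = "{s. s \<ge> 0 \<and> (\<exists>C>0. \<forall>x\<in>F. \<forall>r R. 0 < r \<and> r < R \<longrightarrow>
      real (cover_num (ball x R \<inter> F) r) \<le> C * (R / r) powr s)}"
  have "Inf (ereal ` ?S) \<le> 0"
  proof (rule ereal_le_epsilon2)
    fix \<epsilon> :: real assume "0 < \<epsilon>"
    then have "ereal \<epsilon> \<in> ereal ` ?S" using assms[of \<epsilon>] by auto
    then show "Inf (ereal ` ?S) \<le> 0 + ereal \<epsilon>" by (simp add: Inf_lower)
  qed
  moreover have "0 \<le> Inf (ereal ` ?S)" by (rule Inf_greatest) auto
  ultimately show ?thesis unfolding assouad_dim_def by (rule antisym)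
qed

lemma compact_quarter_ball_cover:
  assumes "compact (l::real set)"
  obtains Y where "finite Y" "l \<subseteq> (\<Union>y\<in>Y. ball y (1/4))"
proof -
  have "\<exists>Y. finite Y \<and> Y \<subseteq> l \<and> l \<subseteq> (\<Union>y\<in>Y. ball y (1/4))"
    using seq_compact_imp_totally_bounded[OF compact_imp_seq_compact[OF assms]] by simp
  then show ?thesis using that by auto
qed

lemma unif_sparse_cover_num_le:
  assumes "compact l" "unif_sparse l" "0 < s"
  obtains A where "\<And>E r. E \<subseteq> l \<Longrightarrow> 0 < r \<Longrightarrow> real (cover_num E r) \<le> A * (max 1 (1/r)) powr s"
proof -
  obtain \<delta> where \<delta>: "0 < \<delta>" "\<delta> \<le> 1"
    "\<And>L N :: nat. (1/\<delta>)^(nat \<lfloor>\<delta> * L\<rfloor> + N) * (1+2*\<delta>)^L \<le> (1/\<delta>)^N * (2^L) powr s"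
    using budget_growth[OF assms(3)] by blast
  obtain N0 where N0: "\<And>b M. b \<in> l \<Longrightarrow> card (W_at l b \<inter> {1..M}) \<le> nat \<lfloor>\<delta> * real M\<rfloor> + N0"
    using unif_sparse_budget[OF assms(2) \<delta>(1)] by blast
  obtain Y where Y: "finite Y" "l \<subseteq> (\<Union>y\<in>Y. ball y (1/4))"
    using compact_quarter_ball_cover[OF assms(1)] by blast
  have "real (cover_num E r) \<le> (2 * card Y * (1/\<delta>)^N0) * (max 1 (1/r)) powr s"
    if "E \<subseteq> l" "0 < r" for E r
  proof -
    obtain M where M: "(1/2)^(M+1) < r" "2^M \<le> max 1 (1/r)" using dyadic_scale[OF \<open>0 < r\<close>] .
    have "real (cover_num E r) \<le> 2 * card Y * ((1/\<delta>)^(nat \<lfloor>\<delta> * M\<rfloor> + N0) * (1+2*\<delta>)^M)"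
      using M(1) N0 by (intro cover_num_le_budget_UN[OF Y that(1) _ _ \<delta>(1,2)]) auto
    also have "\<dots> \<le> 2 * card Y * ((1/\<delta>)^N0 * (2^M) powr s)"
      using \<delta>(3) by (intro mult_left_mono) auto
    also have "(2^M) powr s \<le> (max 1 (1/r)) powr s"
      using M(2) assms(3) by (intro powr_mono2) auto
    finally show ?thesis using \<delta>(1) by (simp add: mult_left_mono mult.assoc)
  qed
  then show ?thesis by (rule that)
qed

lemma two_power_scale_diff_le:
  fixes r R :: real
  assumes "(1/2)^(k+1) < 2*R" "2^M \<le> 1/r" "0 < r" "r < R"
  shows "2^(M+1-k) \<le> 8 * R / r"
proof (cases "k \<le> M+1")
  case True
  have "1 < 2^k * (4*R)" using assms(1) by (simp add: power_one_over field_simps)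
  then have "(2::real)^(M+1-k) \<le> 2^(M+1-k) * (2^k * (4*R))" by simp
  also have "\<dots> = 2 * 2^M * (4*R)" using True by (simp flip: power_add)
  also have "\<dots> \<le> 2 * (1/r) * (4*R)" using assms(2,3,4) by (intro mult_right_mono) auto
  finally show ?thesis by simp
qed (use assms in \<open>simp add: field_simps\<close>)

text \<open>In a ball of radius R only the scales between R and r are counted, and these form a
  window away from 1: this is where super sparsity is needed.\<close>

lemma unif_super_sparse_cover_num_ball_le:
  assumes "unif_super_sparse l" "0 < s"
  obtains A where "\<And>x r R. 0 < r \<Longrightarrow> r < R \<Longrightarrow> R \<le> 1/4 \<Longrightarrow>
    real (cover_num (ball x R \<inter> l) r) \<le> A * (R / r) powr s"
proof -
  obtain \<delta> where \<delta>: "0 < \<delta>" "\<delta> \<le> 1"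
    "\<And>L N :: nat. (1/\<delta>)^(nat \<lfloor>\<delta> * L\<rfloor> + N) * (1+2*\<delta>)^L \<le> (1/\<delta>)^N * (2^L) powr s"
    using budget_growth[OF assms(2)] by blast
  obtain N0 where N0: "\<And>b k M. b \<in> l \<Longrightarrow> 1 \<le> k \<Longrightarrow>
      card (W_at l b \<inter> {k..M}) \<le> nat \<lfloor>\<delta> * real (M+1-k)\<rfloor> + N0"
    using unif_super_sparse_budget[OF assms(1) \<delta>(1)] by blast
  have "real (cover_num (ball x R \<inter> l) r) \<le> (2 * (1/\<delta>)^N0 * 8 powr s) * (R / r) powr s"
    if r: "0 < r" "r < R" "R \<le> 1/4" for x r R
  proof -
    obtain M where M: "(1/2)^(M+1) < r" "2^M \<le> max 1 (1/r)" using dyadic_scale[OF r(1)] .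
    have "0 < 2*R" using r by simp
    then obtain k where k: "(1/2)^(k+1) < 2*R" "2^k \<le> max 1 (1/(2*R))" by (rule dyadic_scale)
    have "1 \<le> k" using k(1) r(3) by (cases k) auto
    have R_scale: "2*R \<le> (1/2)^k" using k r by (auto simp: power_one_over field_simps)
    have "2^(M+1-k) \<le> 8 * R / r"
      using M r k(1) by (intro two_power_scale_diff_le) auto
    have "real (cover_num (ball x R \<inter> l) r) \<le> 2 * ((1/\<delta>)^(nat \<lfloor>\<delta> * (M+1-k)\<rfloor> + N0) * (1+2*\<delta>)^(M+1-k))"
    proof (rule cover_num_le_budget[where l=l, OF _ _ _ _ \<delta>(1,2)])
      have "\<bar>p - q\<bar> \<le> (1/2)^k" if "p \<in> ball x R" "q \<in> ball x R" for p q :: real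
        using dist_triangle3[of p q x] that R_scale by (simp add: dist_real_def)
      then show "\<forall>p\<in>ball x R \<inter> l. \<forall>q\<in>ball x R \<inter> l. \<bar>p - q\<bar> \<le> (1/2)^k" by blast
    qed (use M(1) N0 \<open>1 \<le> k\<close> in auto)
    also have "\<dots> \<le> 2 * ((1/\<delta>)^N0 * (2^(M+1-k)) powr s)"
      using \<delta>(3) by (intro mult_left_mono) auto
    also have "(2^(M+1-k)) powr s \<le> (8 * R / r) powr s"
      using \<open>2^(M+1-k) \<le> 8 * R / r\<close> assms(2) by (intro powr_mono2) auto
    also have "(8 * R / r) powr s = 8 powr s * (R / r) powr s"
      using r by (simp add: powr_mult[symmetric])
    finally show ?thesis using \<delta>(1) by (simp add: mult_left_mono mult.assoc)
  qed
  then show ?thesis by (rule that)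
qed

theorem unif_sparse_upper_box_dim:
  assumes "compact l" "unif_sparse l"
  shows "upper_box_dim l = 0"
proof (rule upper_box_dim_eq_0I)
  fix s :: real assume "0 < s"
  then obtain A where A: "\<And>E r. E \<subseteq> l \<Longrightarrow> 0 < r \<Longrightarrow> real (cover_num E r) \<le> A * (max 1 (1/r)) powr s"
    using unif_sparse_cover_num_le[OF assms] by blast
  have "real (cover_num l r) \<le> A * (1/r) powr s" if "0 < r" "r < 1" for r
    using A[OF order_refl \<open>0 < r\<close>] that by simp
  then show "\<exists>A. \<forall>\<^sub>F r in at_right 0. real (cover_num l r) \<le> A * (1/r) powr s"
    unfolding eventually_at_right_field by (intro exI[of _ 1] exI) auto
qed

theorem unif_super_sparse_assouad_dim:
  assumes "compact l" "unif_super_sparse l"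
  shows "assouad_dim l = 0"
proof (rule assouad_dim_eq_0I)
  fix s :: real assume s: "0 < s"
  obtain A1 where A1: "\<And>E r. E \<subseteq> l \<Longrightarrow> 0 < r \<Longrightarrow> real (cover_num E r) \<le> A1 * (max 1 (1/r)) powr s"
    using unif_sparse_cover_num_le[OF assms(1) unif_super_sparse_imp_unif_sparse[OF assms(2)] s] by blast
  obtain A2 where A2: "\<And>x r R. 0 < r \<Longrightarrow> r < R \<Longrightarrow> R \<le> 1/4 \<Longrightarrow>
      real (cover_num (ball x R \<inter> l) r) \<le> A2 * (R / r) powr s"
    using unif_super_sparse_cover_num_ball_le[OF assms(2) s] by blast
  have "0 \<le> A1" using A1[of "{}" 1] by simp
  define C where "C = max (A1 * 4 powr s) A2 + 1"
  have "real (cover_num (ball x R \<inter> l) r) \<le> C * (R / r) powr s" if "0 < r" "r < R" for x r R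
  proof (cases "R \<le> 1/4")
    case True
    have "real (cover_num (ball x R \<inter> l) r) \<le> A2 * (R / r) powr s" using A2 that True .
    also have "\<dots> \<le> C * (R / r) powr s" by (intro mult_right_mono) (auto simp: C_def)
    finally show ?thesis .
  next
    case False
    have "(max 1 (1/r)) powr s \<le> (4 * (R / r)) powr s"
      using False that s by (intro powr_mono2) (auto simp: field_simps)
    also have "\<dots> = 4 powr s * (R / r) powr s" using that by (simp add: powr_mult[symmetric])
    finally have powr_le: "(max 1 (1/r)) powr s \<le> 4 powr s * (R / r) powr s" .
    have "real (cover_num (ball x R \<inter> l) r) \<le> A1 * (max 1 (1/r)) powr s" using A1 that by simp
    also have "\<dots> \<le> (A1 * 4 powr s) * (R / r) powr s"
      using mult_left_mono[OF powr_le \<open>0 \<le> A1\<close>] by (simp add: mult.assoc)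
    also have "\<dots> \<le> C * (R / r) powr s" by (intro mult_right_mono) (auto simp: C_def)
    finally show ?thesis .
  qed
  moreover have "0 < C" using \<open>0 \<le> A1\<close> by (simp add: C_def add_nonneg_pos max.coboundedI1)
  ultimately show "\<exists>C>0. \<forall>x\<in>l. \<forall>r R. 0 < r \<and> r < R \<longrightarrow>
      real (cover_num (ball x R \<inter> l) r) \<le> C * (R / r) powr s" by blast
qed

section \<open>Finite sets and the set \<open>l0\<close>\<close>

lemma dyadic_scales_subset:
  fixes d :: real
  obtains K where "{k::nat. (1/2)^(k+1) \<le> d \<and> d \<le> (1/2)^k} \<subseteq> {K, K+1}"
proof (cases "\<exists>k. (1/2)^(k+1) \<le> d \<and> d \<le> (1/2::real)^k")
  case True
  define K where "K = (LEAST k. (1/2)^(k+1) \<le> d \<and> d \<le> (1/2::real)^k)"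
  have K: "(1/2)^(K+1) \<le> d" unfolding K_def using LeastI_ex[OF True] by blast
  have "k \<in> {K, K+1}" if "(1/2)^(k+1) \<le> d \<and> d \<le> (1/2::real)^k" for k
  proof -
    have "K \<le> k" unfolding K_def using that by (rule Least_le)
    moreover have "(1/2::real)^(K+1) \<le> (1/2)^k" using K that by linarith
    then have "k \<le> K+1" by (subst (asm) power_decreasing_iff) auto
    ultimately show ?thesis by auto
  qed
  then show ?thesis using that by blast
qed (use that in auto)

lemma card_W_at_le:
  assumes "finite l"
  shows "finite (W_at l a) \<and> card (W_at l a) \<le> 2 * card l"
proof -
  define S where "S x = {k::nat. (1/2)^(k+1) \<le> \<bar>x - a\<bar> \<and> \<bar>x - a\<bar> \<le> (1/2)^k}" for x
  have S: "finite (S x) \<and> card (S x) \<le> 2" for x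
  proof -
    obtain K where "S x \<subseteq> {K, K+1}" unfolding S_def by (rule dyadic_scales_subset)
    then show ?thesis using card_mono[of "{K, K+1}" "S x"] finite_subset by fastforce
  qed
  have sub: "W_at l a \<subseteq> (\<Union>x\<in>l. S x)" unfolding S_def mem_W_at_iff by (auto simp: subset_iff mem_W_at_iff)
  have fin: "finite (\<Union>x\<in>l. S x)" using assms S by blast
  have "card (W_at l a) \<le> card (\<Union>x\<in>l. S x)" by (rule card_mono[OF fin sub])
  also have "\<dots> \<le> (\<Sum>x\<in>l. card (S x))" by (rule card_UN_le[OF assms])
  also have "\<dots> \<le> 2 * card l" using S sum_mono[of l "\<lambda>x. card (S x)" "\<lambda>_. 2"] by simp
  finally show ?thesis using finite_subset[OF sub fin] by simp
qed

theorem finite_imp_unif_super_sparse: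
  assumes "finite l"
  shows "unif_super_sparse l"
  unfolding unif_super_sparse_def
proof (intro allI impI)
  fix \<delta> :: real assume \<delta>: "0 < \<delta>"
  define N0 where "N0 = nat \<lceil>2 * card l / \<delta>\<rceil>"
  have "2 * card l / \<delta> \<le> N0" unfolding N0_def by (rule real_nat_ceiling_ge)
  then have N0: "2 * card l \<le> \<delta> * N0" using \<delta> by (simp add: field_simps)
  have "real (card (W_at l a \<inter> {k+1..k+N})) \<le> \<delta> * N" if "N0 \<le> N" for a k N
  proof -
    have "card (W_at l a \<inter> {k+1..k+N}) \<le> card (W_at l a)"
      using card_W_at_le[OF assms] by (intro card_mono) auto
    also have "\<dots> \<le> 2 * card l" using card_W_at_le[OF assms] by blast
    finally have "real (card (W_at l a \<inter> {k+1..k+N})) \<le> 2 * card l" by linarith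
    also have "\<dots> \<le> \<delta> * N" using N0 that \<delta> by (smt (verit) mult_left_mono of_nat_mono)
    finally show ?thesis .
  qed
  then show "\<exists>N\<delta>. \<forall>a\<in>l. \<forall>k. \<forall>N\<ge>N\<delta>. real (card (W_at l a \<inter> {k+1..k+N})) \<le> \<delta> * real N"
    by blast
qed

definition dyadic_points :: "real set" where
  "dyadic_points = insert 0 (range (\<lambda>k::nat. (1/2)^k))"

lemma W_at_dyadic_points: "W_at dyadic_points 0 = UNIV"
proof -
  have "k \<in> W_at dyadic_points 0" for k
    unfolding mem_W_at_iff dyadic_points_def by (intro bexI[of _ "(1/2)^k"]) auto
  then show ?thesis by blast
qed

lemma not_sparse_near_dyadic_points: "\<not> sparse_near dyadic_points 0"
proof -
  have "\<forall>\<^sub>F n in sequentially. 1 \<le> ereal (real (card (W_at dyadic_points 0 \<inter> {1..n})) / real n)"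
    unfolding W_at_dyadic_points eventually_sequentially by (intro exI[of _ 1]) auto
  then have "1 \<le> limsup (\<lambda>n. ereal (real (card (W_at dyadic_points 0 \<inter> {1..n})) / real n))"
    by (intro le_Limsup) simp_all
  then show ?thesis unfolding sparse_near_def by auto
qed

lemma not_unif_sparse_dyadic_points: "\<not> unif_sparse dyadic_points"
proof
  assume "unif_sparse dyadic_points"
  then obtain N0 where "\<forall>N\<ge>N0. real (card (W_at dyadic_points 0 \<inter> {1..N})) \<le> 1/2 * real N"
    unfolding unif_sparse_def dyadic_points_def by (meson half_gt_zero insertI1 zero_less_one)
  then have "real (max N0 1) \<le> 1/2 * real (max N0 1)"
    unfolding W_at_dyadic_points by (metis Int_UNIV_left card_atLeastAtMost diff_Suc_1 max.cobounded1)
  then show False by simp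
qed

lemma cover_num_dyadic_points_le:
  assumes "(1/2)^(M+1) < r"
  shows "cover_num dyadic_points r \<le> M + 2"
proof -
  let ?C = "insert 0 ((\<lambda>k. (1/2::real)^k) ` {..M})"
  have r0: "0 < r" using assms zero_less_power[of "1/2::real" "M+1"] by linarith
  have "dyadic_points \<subseteq> (\<Union>c\<in>?C. {c..c+r})"
  proof
    fix x assume "x \<in> dyadic_points"
    then consider "x = 0" | k where "x = (1/2)^k" "k \<le> M" | k where "x = (1/2)^k" "M < k"
      unfolding dyadic_points_def by force
    then show "x \<in> (\<Union>c\<in>?C. {c..c+r})"
    proof cases
      case 1
      then show ?thesis using r0 by (intro UN_I[of 0]) auto
    next
      case (2 k)
      then show ?thesis using r0 by (intro UN_I[of x]) auto
    next
      case (3 k)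
      then have "x \<le> (1/2)^(M+1)" using power_decreasing[of "M+1" k "1/2::real"] by simp
      then show ?thesis using 3 assms by (intro UN_I[of 0]) auto
    qed
  qed
  then have "cover_num dyadic_points r \<le> card ?C" by (intro cover_num_le) auto
  also have "\<dots> \<le> Suc (card ((\<lambda>k. (1/2::real)^k) ` {..M}))" by (simp add: card_insert_if)
  also have "card ((\<lambda>k. (1/2::real)^k) ` {..M}) \<le> card {..M}" by (rule card_image_le) simp
  finally show ?thesis by simp
qed

lemma upper_box_dim_dyadic_points: "upper_box_dim dyadic_points = 0"
proof (rule upper_box_dim_eq_0I)
  fix s :: real assume s: "0 < s"
  have "real (cover_num dyadic_points r) \<le> (1 / (s * ln 2) + 2) * (1/r) powr s" if r: "0 < r" "r < 1" for r
  proof -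
    obtain M where M: "(1/2)^(M+1) < r" "2^M \<le> max 1 (1/r)" using dyadic_scale[OF r(1)] .
    have one: "1 \<le> (1/r) powr s" using r s by (simp add: ge_one_powr_ge_zero)
    have "real M * ln 2 = ln (2^M)" by (simp add: ln_realpow)
    also have "\<dots> \<le> ln (1/r)" using M(2) r by simp
    finally have "s * (real M * ln 2) \<le> ln ((1/r) powr s)" using s r by (simp add: ln_powr)
    also have "\<dots> \<le> (1/r) powr s" using ln_le_minus_one[of "(1/r) powr s"] r by simp
    finally have "real M \<le> (1/r) powr s / (s * ln 2)" using s by (simp add: field_simps)
    then have "real M + 2 \<le> (1 / (s * ln 2) + 2) * (1/r) powr s" using one by (simp add: field_simps)
    moreover have "real (cover_num dyadic_points r) \<le> real M + 2"
      using cover_num_dyadic_points_le[OF M(1)] by simp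
    ultimately show ?thesis by linarith
  qed
  then show "\<exists>A. \<forall>\<^sub>F r in at_right 0. real (cover_num dyadic_points r) \<le> A * (1/r) powr s"
    unfolding eventually_at_right_field by (intro exI[of _ 1] exI) auto
qed

theorem proposition4p2:
  fixes l :: "real set"
  assumes "compact l"
  shows "(unif_sparse l \<longrightarrow> upper_box_dim l = 0)
       \<and> (unif_super_sparse l \<longrightarrow> assouad_dim l = 0)
       \<and> (finite l \<longrightarrow> unif_super_sparse l)
       \<and> (let l0 = insert 0 ((\<lambda>k::nat. (1/2::real)^k) ` UNIV) in
            upper_box_dim l0 = 0 \<and> \<not> sparse_near l0 0 \<and> \<not> unif_sparse l0)"
  unfolding Let_def dyadic_points_def[symmetric]
  by (simp add: unif_sparse_upper_box_dim[OF assms] unif_super_sparse_assouad_dim[OF assms]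
      finite_imp_unif_super_sparse upper_box_dim_dyadic_points not_sparse_near_dyadic_points
      not_unif_sparse_dyadic_points)

end
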